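(* Assume the standing assumptions (A1)–(A4) below. Let $r>0$ be a constant such that $\|u\|^2+\|w\|^2\le r$ for every $u\in\mathcal U$ and every extreme point $w$ of $\mathcal W$. Then for every $x\in\mathcal X$ the optimal value of \[ \min_{\lambda\in\mathbb R,\ \Lambda\in\mathbb R^{(k+m)\times n_2},\ \rho\in\mathbb R}\ \lambda+r\rho\quad\text{s.t.}\quad \lambda g_1g_1^T-\tfrac12 G(x)+\tfrac12(E^T\Lambda^T+\Lambda E)+\rho I\in \mathrm{COP}(\widehat{\mathcal U}\times\mathbb R^m_+),\ \ \rho\ge 0 \] equals $\pi(x)$.
   Context: Data: $A\in\mathbb R^{m\times n_1}$, $B\in\mathbb R^{m\times n_2}$, $c\in\mathbb R^{n_1}$, $d\in\mathbb R^{n_2}$, $F\in\mathbb R^{m\times k}$, $\mathcal X\subseteq\mathbb R^{n_1}$ closed convex. $\widehat{\mathcal U}\subseteq\mathbb R_+\times\mathbb R^{k-1}$ is a closed, convex, full-dimensional cone and $\mathcal U:=\{u\in\widehat{\mathcal U}: u_1=1\}$, assumed nonempty and compact. $e_1\in\mathbb R^k$ is the first standard basis vector, $g_1:=(e_1;0)\in\mathbb R^{k+m}$. The two-stage problem (RLP) is: $v^*_{RLP}:=\inf\{c^Tx+\sup_{u\in\mathcal U}d^Ty(u)\}$ over $x\in\mathcal X$ and maps $y:\mathcal U\to\mathbb R^{n_2}$ with $Ax+By(u)\ge Fu$ for all $u\in\mathcal U$. Standing assumptions: (A1) $\mathcal X$ and $\widehat{\mathcal U}$ are computationally tractable; (A2)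 (RLP) is feasible; (A3) $v^*_{RLP}$ is finite; (A4) relatively complete recourse: for all $x\in\mathcal X$, $u\in\mathcal U$ there is $y\in\mathbb R^{n_2}$ with $By\ge Fu-Ax$. Define $\mathcal W:=\{w\in\mathbb R^m: w\ge0,\ B^Tw=d\}$, $\pi(x):=\max_{u\in\mathcal U}\min_{y\in\mathbb R^{n_2}}\{d^Ty: By\ge Fu-Ax\}$, $E:=\begin{pmatrix}-de_1^T & B^T\end{pmatrix}\in\mathbb R^{n_2\times(k+m)}$, and $G(x):=\begin{pmatrix}0&(F-Axe_1^T)^T\\ F-Axe_1^T&0\end{pmatrix}\in\mathcal S^{k+m}$. For a closed convex cone $\mathcal K\subseteq\mathbb R^n$, $\mathrm{COP}(\mathcal K):=\{M\in\mathcal S^n: z^TMz\ge0\ \forall z\in\mathcal K\}$ and $\mathrm{CPP}(\mathcal K):=\{\sum_i z^i(z^i)^T: z^i\in\mathcal K\}$ (finite sums). *)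

theory Defs
  imports "HOL-Analysis.Analysis"
begin

text \<open>Vectors live in real^'n for finite index types; the (k+m)-dimensional
  space is real^('k::finite + 'm::finite), with Inl indexing the first k coordinates and Inr
  the last m.  The index i1 :: 'k plays the role of the first coordinate.\<close>

definition e1vec :: "'k \<Rightarrow> real^'k" where
  "e1vec i1 = (\<chi> i. if i = i1 then 1 else 0)"

definition COP :: "(real^'n) set \<Rightarrow> (real^'n^'n) set" where
  "COP K = {M. transpose M = M \<and> (\<forall>z\<in>K. 0 \<le> z \<bullet> (M *v z))}"

definition cone_prod :: "(real^'k) set \<Rightarrow> (real^('k::finite + 'm::finite)) set" where
  "cone_prod Uh = {z. (\<chi> i. z $ Inl i) \<in> Uh \<and> (\<forall>j. 0 \<le> z $ Inr j)}"

definition Uset :: "'k \<Rightarrow> (real^'k) set \<Rightarrow> (real^'k) set" where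
  "Uset i1 Uh = {u \<in> Uh. u $ i1 = 1}"

definition Wset :: "real^'n2^'m \<Rightarrow> real^'n2 \<Rightarrow> (real^'m) set" where
  "Wset B d = {w. (\<forall>j. 0 \<le> w $ j) \<and> transpose B *v w = d}"

definition pi_val :: "real^'n1^'m \<Rightarrow> real^'n2^'m \<Rightarrow> real^'n2 \<Rightarrow> real^'k^'m
    \<Rightarrow> (real^'k) set \<Rightarrow> real^'n1 \<Rightarrow> ereal" where
  "pi_val A B d F U x =
     (SUP u\<in>U. INF y\<in>{y. \<forall>j. (F *v u - A *v x) $ j \<le> (B *v y) $ j}. ereal (d \<bullet> y))"

text \<open>E = ( -d e1^T , B^T ) in R^(n2 x (k+m)).\<close>
definition Emat :: "'k \<Rightarrow> real^'n2^'m \<Rightarrow> real^'n2 \<Rightarrow> real^('k::finite + 'm::finite)^'n2" where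
  "Emat i1 B d = (\<chi> p q. case q of Inl i \<Rightarrow> - (d $ p) * (e1vec i1 $ i)
                                   | Inr j \<Rightarrow> B $ j $ p)"

text \<open>G(x) = [[0, (F - A x e1^T)^T], [F - A x e1^T, 0]].\<close>
definition Gmat :: "'k \<Rightarrow> real^'n1^'m \<Rightarrow> real^'k^'m \<Rightarrow> real^'n1
    \<Rightarrow> real^('k::finite + 'm::finite)^('k + 'm)" where
  "Gmat i1 A F x = (let H = (\<chi> j i. F $ j $ i - (A *v x) $ j * (e1vec i1 $ i)) in
     (\<chi> p q. case p of
        Inl i \<Rightarrow> (case q of Inl i' \<Rightarrow> 0 | Inr j \<Rightarrow> H $ j $ i)
      | Inr j \<Rightarrow> (case q of Inl i \<Rightarrow> H $ j $ i | Inr j' \<Rightarrow> 0)))"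

definition g1vec :: "'k \<Rightarrow> real^('k::finite + 'm::finite)" where
  "g1vec i1 = (\<chi> p. case p of Inl i \<Rightarrow> e1vec i1 $ i | Inr j \<Rightarrow> 0)"

definition outer :: "real^'n \<Rightarrow> real^'n \<Rightarrow> real^'n^'n" where
  "outer a b = (\<chi> i j. a $ i * b $ j)"

definition cop_feasible :: "'k \<Rightarrow> (real^'k) set \<Rightarrow> real^'n1^'m \<Rightarrow> real^'n2^'m
    \<Rightarrow> real^'n2 \<Rightarrow> real^'k^'m \<Rightarrow> real^'n1
    \<Rightarrow> (real \<times> (real^'n2^('k + 'm)) \<times> real) set" where
  "cop_feasible i1 Uh A B d F x =
     {(lam, Lam, rho). rho \<ge> 0 \<and>
        lam *\<^sub>R outer (g1vec i1) (g1vec i1) - (1/2) *\<^sub>R Gmat i1 A F x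
        + (1/2) *\<^sub>R (transpose (Emat i1 B d) ** transpose Lam + Lam ** Emat i1 B d)
        + rho *\<^sub>R mat 1 \<in> COP (cone_prod Uh :: (real^('k::finite + 'm::finite)) set)}"

definition cop_value :: "'k \<Rightarrow> (real^'k) set \<Rightarrow> real^'n1^'m \<Rightarrow> real^'n2^'m
    \<Rightarrow> real^'n2 \<Rightarrow> real^'k^'m \<Rightarrow> real \<Rightarrow> real^'n1 \<Rightarrow> ereal" where
  "cop_value i1 Uh A B d F r x =
     (INF (lam, Lam, rho)\<in>cop_feasible i1 Uh A B d F x. ereal (lam + r * rho))"

definition rlp_feasible :: "(real^'n1) set \<Rightarrow> (real^'k) set \<Rightarrow> real^'n1^'m
    \<Rightarrow> real^'n2^'m \<Rightarrow> real^'k^'m \<Rightarrow> ((real^'n1) \<times> (real^'k \<Rightarrow> real^'n2)) set" where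
  "rlp_feasible X U A B F =
     {(x, y). x \<in> X \<and> (\<forall>u\<in>U. \<forall>j. (F *v u) $ j \<le> (A *v x + B *v y u) $ j)}"

definition rlp_value :: "(real^'n1) set \<Rightarrow> (real^'k) set \<Rightarrow> real^'n1^'m
    \<Rightarrow> real^'n2^'m \<Rightarrow> real^'n1 \<Rightarrow> real^'n2 \<Rightarrow> real^'k^'m \<Rightarrow> ereal" where
  "rlp_value X U A B c d F =
     (INF (x, y)\<in>rlp_feasible X U A B F. ereal (c \<bullet> x) + (SUP u\<in>U. ereal (d \<bullet> y u)))"

end

(*
  Fix x and write H = F - A x e1^T, so that the quadratic form of G(x) is 2 w^T H u on z = (u, w).

  pi(x) <= value: by LP duality the inner minimum at u in U is the maximum of w^T (F u - A x)
  over the extreme points w of W (primal feasibility by relatively complete recourse excludes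
  improving rays).  For such w the lifted point z = (u, w) lies in the cone, satisfies E z = 0 and
  |z|^2 <= r, so copositivity of the constraint matrix at z gives w^T (F u - A x) <= lambda + r rho.

  value <= pi(x): let v >= pi(x) and rho > 0.  Every z = (u, w) in the cone with E z = 0 satisfies
  w^T H u <= v u_1^2: scale to u_1 = 1 and use weak duality (u_1 = 0 forces u = 0 because U is
  bounded).  Separating the compact convex hull of the points (E z z^T, w^T H u - v u_1^2 - rho),
  z on the unit sphere of the cone, from the ray {0} x R_+ produces Lambda with
  (v, Lambda, rho) feasible on the sphere, hence by homogeneity on the whole cone.
*)

theory Submission
  imports Defs
begin

section \<open>Block vectors\<close>

definition vec_inl :: "'a^('k::finite + 'm::finite) \<Rightarrow> 'a^'k" where
  "vec_inl z = (\<chi> i. z $ Inl i)"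

definition vec_inr :: "'a^('k::finite + 'm::finite) \<Rightarrow> 'a^'m" where
  "vec_inr z = (\<chi> j. z $ Inr j)"

definition vec_join :: "'a^'k \<Rightarrow> 'a^'m \<Rightarrow> 'a^('k::finite + 'm::finite)" where
  "vec_join u w = (\<chi> p. case p of Inl i \<Rightarrow> u $ i | Inr j \<Rightarrow> w $ j)"

lemma vec_inl_join [simp]: "vec_inl (vec_join u w) = u"
  and vec_inr_join [simp]: "vec_inr (vec_join u w) = w"
  and vec_join_Inl [simp]: "vec_join u w $ Inl i = u $ i"
  by (simp_all add: vec_inl_def vec_inr_def vec_join_def vec_eq_iff)

lemma vec_inl_nth [simp]: "vec_inl z $ i = z $ Inl i"
  and vec_inr_nth [simp]: "vec_inr z $ j = z $ Inr j"
  by (simp_all add: vec_inl_def vec_inr_def)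

lemma vec_inl_scaleR [simp]: "vec_inl (c *\<^sub>R z) = c *\<^sub>R vec_inl z"
  and vec_inr_scaleR [simp]: "vec_inr (c *\<^sub>R z) = c *\<^sub>R vec_inr z"
  by (simp_all add: vec_eq_iff)

lemma sum_UNIV_Plus:
  fixes f :: "'a::finite + 'b::finite \<Rightarrow> 'c::comm_monoid_add"
  shows "(\<Sum>p\<in>UNIV. f p) = (\<Sum>i\<in>UNIV. f (Inl i)) + (\<Sum>j\<in>UNIV. f (Inr j))"
proof -
  have "sum f (UNIV::('a::finite + 'b::finite) set) = sum f ((UNIV::'a set) <+> (UNIV::'b set))"
    by simp
  also have "\<dots> = sum (f \<circ> Inl) UNIV + sum (f \<circ> Inr) UNIV"
    by (rule sum.Plus) auto
  finally show ?thesis by simp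
qed

lemma inner_vec_Plus: "(z::real^('k::finite + 'm::finite)) \<bullet> y = vec_inl z \<bullet> vec_inl y + vec_inr z \<bullet> vec_inr y"
  by (simp add: inner_vec_def sum_UNIV_Plus)

lemma mem_cone_prod_iff: "z \<in> cone_prod Uh \<longleftrightarrow> vec_inl z \<in> Uh \<and> (\<forall>j. 0 \<le> vec_inr z $ j)"
  by (simp add: cone_prod_def vec_inl_def)

lemma cone_cone_prod: "cone Uh \<Longrightarrow> cone (cone_prod Uh)"
  by (simp add: cone_def mem_cone_prod_iff)

lemma closed_cone_prod:
  assumes "closed Uh"
  shows "closed (cone_prod Uh :: (real^('k::finite + 'm::finite)) set)"
proof -
  have "cone_prod Uh = vec_inl -` Uh \<inter> {z::real^('k + 'm). \<forall>j. 0 \<le> z $ Inr j}"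
    by (auto simp: mem_cone_prod_iff)
  moreover have "continuous_on UNIV (vec_inl :: real^('k + 'm) \<Rightarrow> real^'k)"
    unfolding vec_inl_def[abs_def] by (intro continuous_on_vec_lambda continuous_intros)
  then have "closed (vec_inl -` Uh :: (real^('k + 'm)) set)"
    using assms by (simp add: closed_vimage)
  moreover have "closed {z::real^('k + 'm). \<forall>j. 0 \<le> z $ Inr j}"
    by (intro closed_Collect_all closed_Collect_le continuous_intros)
  ultimately show ?thesis by auto
qed

lemma sum_e1vec_mult:
  "(\<Sum>i\<in>UNIV. e1vec i1 $ i * f i) = f i1" "(\<Sum>i\<in>UNIV. f i * e1vec i1 $ i) = f i1"
proof -
  have "e1vec i1 $ i * f i = (if i = i1 then f i else 0)" "f i * e1vec i1 $ i = (if i = i1 then f i else 0)" for i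
    by (simp_all add: e1vec_def)
  then show "(\<Sum>i\<in>UNIV. e1vec i1 $ i * f i) = f i1" "(\<Sum>i\<in>UNIV. f i * e1vec i1 $ i) = f i1"
    by (simp_all add: sum.delta)
qed

lemma inner_g1vec: "g1vec i1 \<bullet> (z::real^('k::finite + 'm::finite)) = z $ Inl i1"
  by (simp add: inner_vec_def sum_UNIV_Plus g1vec_def sum_e1vec_mult)

lemma outer_mult_vec: "outer a b *v z = (b \<bullet> z) *\<^sub>R a"
  by (simp add: vec_eq_iff outer_def matrix_vector_mult_def inner_vec_def sum_distrib_left algebra_simps)

section \<open>The constraint matrix and its quadratic form\<close>

definition Hmat :: "'k \<Rightarrow> real^'n1^'m \<Rightarrow> real^'k^'m \<Rightarrow> real^'n1 \<Rightarrow> real^'k^'m" where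
  "Hmat i1 A F x = (\<chi> j i. F $ j $ i - (A *v x) $ j * e1vec i1 $ i)"

lemma Hmat_mult_vec: "Hmat i1 A F x *v u = F *v u - (u $ i1) *\<^sub>R (A *v x)"
proof -
  have "(\<Sum>i\<in>UNIV. (F $ j $ i - a * e1vec i1 $ i) * u $ i) = (F *v u) $ j - u $ i1 * a" for j a
    using sum_e1vec_mult(1)[of i1 "\<lambda>i. a * u $ i"]
    by (simp add: matrix_vector_mult_def algebra_simps sum_subtractf)
  moreover have "(Hmat i1 A F x *v u) $ j = (\<Sum>i\<in>UNIV. (F $ j $ i - (A *v x) $ j * e1vec i1 $ i) * u $ i)" for j
    by (simp add: Hmat_def matrix_vector_mult_def)
  ultimately show ?thesis
    by (simp add: vec_eq_iff)
qed

lemma Emat_mult_vec: "Emat i1 B d *v z = transpose B *v vec_inr z - (z $ Inl i1) *\<^sub>R d"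
proof -
  have "(\<Sum>i\<in>UNIV. - (d $ p * (e1vec i1 $ i * z $ Inl i))) = - (d $ p * z $ Inl i1)" for p
    using sum_e1vec_mult(1)[of i1 "\<lambda>i. - d $ p * z $ Inl i"] by (simp add: mult_ac)
  then show ?thesis
    by (simp add: vec_eq_iff Emat_def matrix_vector_mult_def sum_UNIV_Plus transpose_def mult_ac)
qed

lemma Gmat_nth [simp]:
  "Gmat i1 A F x $ Inl i $ Inl i' = 0" "Gmat i1 A F x $ Inl i $ Inr j = Hmat i1 A F x $ j $ i"
  "Gmat i1 A F x $ Inr j $ Inl i = Hmat i1 A F x $ j $ i" "Gmat i1 A F x $ Inr j $ Inr j' = 0"
  by (simp_all add: Gmat_def Hmat_def Let_def)

lemma transpose_Gmat: "transpose (Gmat i1 A F x) = Gmat i1 A F x"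
proof -
  have "Gmat i1 A F x $ p $ q = Gmat i1 A F x $ q $ p" for p q
    by (cases p; cases q) simp_all
  then show ?thesis
    by (simp add: transpose_def vec_eq_iff)
qed

lemma quadratic_form_Gmat: "z \<bullet> (Gmat i1 A F x *v z) = 2 * (vec_inr z \<bullet> (Hmat i1 A F x *v vec_inl z))"
proof -
  let ?H = "Hmat i1 A F x"
  have "z \<bullet> (Gmat i1 A F x *v z) = (\<Sum>i\<in>UNIV. \<Sum>j\<in>UNIV. z $ Inl i * (?H $ j $ i * z $ Inr j))
      + (\<Sum>j\<in>UNIV. z $ Inr j * (\<Sum>i\<in>UNIV. ?H $ j $ i * z $ Inl i))"
    by (simp add: inner_vec_def matrix_vector_mult_def sum_UNIV_Plus sum_distrib_left)
  also have "(\<Sum>i\<in>UNIV. \<Sum>j\<in>UNIV. z $ Inl i * (?H $ j $ i * z $ Inr j))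
      = (\<Sum>j\<in>UNIV. z $ Inr j * (\<Sum>i\<in>UNIV. ?H $ j $ i * z $ Inl i))"
    by (subst sum.swap) (simp add: sum_distrib_left mult_ac)
  also have "(\<Sum>j\<in>UNIV. z $ Inr j * (\<Sum>i\<in>UNIV. ?H $ j $ i * z $ Inl i)) = vec_inr z \<bullet> (?H *v vec_inl z)"
    by (simp add: inner_vec_def matrix_vector_mult_def)
  finally show ?thesis by simp
qed

lemma inner_mult_mult_vec: "(z::real^'n) \<bullet> ((L ** (E::real^'n^'p)) *v z) = (transpose L *v z) \<bullet> (E *v z)"
  by (simp flip: matrix_vector_mul_assoc add: dot_lmul_matrix)

definition cop_matrix :: "'k \<Rightarrow> real^'n1^'m \<Rightarrow> real^'n2^'m \<Rightarrow> real^'n2 \<Rightarrow> real^'k^'m \<Rightarrow> real^'n1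
    \<Rightarrow> real \<Rightarrow> real^'n2^('k::finite + 'm::finite) \<Rightarrow> real \<Rightarrow> real^('k + 'm)^('k + 'm)" where
  "cop_matrix i1 A B d F x lam Lam rho =
     lam *\<^sub>R outer (g1vec i1) (g1vec i1) - (1/2) *\<^sub>R Gmat i1 A F x
     + (1/2) *\<^sub>R (transpose (Emat i1 B d) ** transpose Lam + Lam ** Emat i1 B d)
     + rho *\<^sub>R mat 1"

lemma transpose_add: "transpose ((P::'a::ab_group_add^'n^'m) + Q) = transpose P + transpose Q"
  and transpose_diff: "transpose ((P::'a::ab_group_add^'n^'m) - Q) = transpose P - transpose Q"
  by (simp_all add: transpose_def vec_eq_iff)

lemma transpose_outer_self: "transpose (outer a a) = outer a a"
  by (simp add: transpose_def outer_def vec_eq_iff mult.commute)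

lemma transpose_cop_matrix:
  "transpose (cop_matrix i1 A B d F x lam Lam rho) = cop_matrix i1 A B d F x lam Lam rho"
  unfolding cop_matrix_def
  by (simp only: transpose_add transpose_diff transpose_scalar transpose_outer_self transpose_Gmat
      matrix_transpose_mul transpose_transpose transpose_mat add.commute)

lemma quadratic_form_cop_matrix:
  "z \<bullet> (cop_matrix i1 A B d F x lam Lam rho *v z) =
     lam * (z $ Inl i1)\<^sup>2 - vec_inr z \<bullet> (Hmat i1 A F x *v vec_inl z)
     + (transpose Lam *v z) \<bullet> (Emat i1 B d *v z) + rho * (z \<bullet> z)"
proof -
  have "z \<bullet> (outer (g1vec i1) (g1vec i1) *v z) = (z $ Inl i1)\<^sup>2"
    by (simp add: outer_mult_vec inner_g1vec inner_commute[of z] power2_eq_square)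
  moreover have "z \<bullet> ((transpose (Emat i1 B d) ** transpose Lam + Lam ** Emat i1 B d) *v z)
      = 2 * ((transpose Lam *v z) \<bullet> (Emat i1 B d *v z))"
    by (simp add: matrix_vector_mult_add_rdistrib inner_add_right inner_mult_mult_vec inner_commute)
  ultimately show ?thesis
    by (simp add: cop_matrix_def matrix_vector_mult_add_rdistrib matrix_vector_mult_diff_rdistrib
        scaleR_matrix_vector_assoc[symmetric] inner_add_right inner_diff_right quadratic_form_Gmat)
qed

lemma mem_cop_feasible_iff:
  "(lam, Lam, rho) \<in> cop_feasible i1 Uh A B d F x \<longleftrightarrow>
     0 \<le> rho \<and> (\<forall>z\<in>cone_prod Uh. 0 \<le> z \<bullet> (cop_matrix i1 A B d F x lam Lam rho *v z))"
  using transpose_cop_matrix[of i1 A B d F x lam Lam rho]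
  by (auto simp: cop_feasible_def COP_def cop_matrix_def)

definition dyad :: "real^'p \<Rightarrow> real^'q \<Rightarrow> real^'q^'p" where
  "dyad a b = (\<chi> i j. a $ i * b $ j)"

lemma inner_dyad: "(M::real^'q^'p) \<bullet> dyad a z = a \<bullet> (M *v z)"
  by (simp add: inner_vec_def dyad_def matrix_vector_mult_def sum_distrib_left mult_ac)

section \<open>Linear programming duality\<close>

definition lp_min :: "real^'n^'m \<Rightarrow> real^'n \<Rightarrow> real^'m \<Rightarrow> ereal" where
  "lp_min B d b = (INF y\<in>{y. \<forall>j. b $ j \<le> (B *v y) $ j}. ereal (d \<bullet> y))"

lemma pi_val_eq_SUP_lp_min: "pi_val A B d F U x = (SUP u\<in>U. lp_min B d (F *v u - A *v x))"
  by (simp add: pi_val_def lp_min_def)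

lemma weak_duality:
  assumes "w \<in> Wset B d" "\<forall>j. b $ j \<le> (B *v y) $ j"
  shows "w \<bullet> b \<le> d \<bullet> y"
proof -
  have "w \<bullet> b \<le> w \<bullet> (B *v y)"
    unfolding inner_vec_def by (rule sum_mono) (use assms in \<open>auto intro: mult_left_mono simp: Wset_def\<close>)
  also have "\<dots> = (transpose B *v w) \<bullet> y"
    by (simp add: dot_lmul_matrix)
  finally show ?thesis
    using assms(1) by (simp add: Wset_def)
qed

lemma inner_le_lp_min: "w \<in> Wset B d \<Longrightarrow> ereal (w \<bullet> b) \<le> lp_min B d b"
  unfolding lp_min_def by (rule INF_greatest) (simp add: weak_duality)

lemma dual_value_le_pi_val:
  "u \<in> U \<Longrightarrow> w \<in> Wset B d \<Longrightarrow> ereal (w \<bullet> (F *v u - A *v x)) \<le> pi_val A B d F U x"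
  unfolding pi_val_eq_SUP_lp_min by (rule SUP_upper2) (auto intro: inner_le_lp_min)

lemma convex_cone_lp_combinations:
  fixes B :: "real^'n^'m"
  shows "convex_cone {(transpose B *v \<mu> - t0 *\<^sub>R d, \<mu> \<bullet> b - t0 * v - t1) |\<mu> t0 t1.
                         (\<forall>j. 0 \<le> \<mu> $ j) \<and> 0 \<le> t0 \<and> 0 \<le> t1}"
    (is "convex_cone ?C")
  unfolding convex_cone_iff
proof (intro conjI ballI allI impI)
  show "0 \<in> ?C"
    by (intro CollectI exI[of _ 0]) (simp add: zero_prod_def)
next
  fix p q assume "p \<in> ?C" "q \<in> ?C"
  then obtain \<mu> s t \<mu>' s' t' where "\<forall>j. 0 \<le> \<mu> $ j" "0 \<le> s" "0 \<le> t"
    "\<forall>j. 0 \<le> \<mu>' $ j" "0 \<le> s'" "0 \<le> t'"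
    "p = (transpose B *v \<mu> - s *\<^sub>R d, \<mu> \<bullet> b - s * v - t)"
    "q = (transpose B *v \<mu>' - s' *\<^sub>R d, \<mu>' \<bullet> b - s' * v - t')"
    by blast
  then show "p + q \<in> ?C"
    by (intro CollectI exI[of _ "\<mu> + \<mu>'"] exI[of _ "s + s'"] exI[of _ "t + t'"])
      (simp add: matrix_vector_right_distrib inner_add_left algebra_simps)
next
  fix p and c :: real assume "p \<in> ?C" "0 \<le> c"
  then obtain \<mu> s t where "\<forall>j. 0 \<le> \<mu> $ j" "0 \<le> s" "0 \<le> t"
    "p = (transpose B *v \<mu> - s *\<^sub>R d, \<mu> \<bullet> b - s * v - t)"
    by blast
  with \<open>0 \<le> c\<close> show "c *\<^sub>R p \<in> ?C"
    by (intro CollectI exI[of _ "c *\<^sub>R \<mu>"] exI[of _ "c * s"] exI[of _ "c * t"])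
      (simp add: matrix_vector_mult_scaleR algebra_simps)
qed

lemma convex_cone_hull_lp_data_cases:
  fixes B :: "real^'n^'m"
  assumes "p \<in> convex_cone hull (range (\<lambda>j. (B $ j, b $ j)) \<union> {(-d, -v), (0, -1)})"
  obtains \<mu> t0 t1 where "\<forall>j. 0 \<le> \<mu> $ j" "0 \<le> t0" "0 \<le> t1"
    "p = (transpose B *v \<mu> - t0 *\<^sub>R d, \<mu> \<bullet> b - t0 * v - t1)"
proof -
  define C :: "((real^'n) \<times> real) set" where
    "C = {(transpose B *v \<mu> - t0 *\<^sub>R d, \<mu> \<bullet> b - t0 * v - t1) |\<mu> t0 t1.
            (\<forall>j. 0 \<le> \<mu> $ j) \<and> 0 \<le> t0 \<and> 0 \<le> t1}"
  have "transpose B *v axis j 1 = B $ j" "\<forall>i. 0 \<le> (axis j 1 :: real^'m) $ i" for j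
    by (simp add: matrix_vector_mult_basis row_def vec_eq_iff) (simp add: axis_def)
  then have "(B $ j, b $ j) \<in> C" for j
    unfolding C_def
    by (intro CollectI exI[of _ "axis j 1"] exI[of _ 0]) (simp del: transpose_matrix_vector add: inner_axis')
  moreover have "(-d, -v) \<in> C" "(0, -1) \<in> C"
    unfolding C_def by (intro CollectI exI[of _ 0] exI[of _ 1]; simp)+
  moreover have "convex_cone C"
    unfolding C_def by (rule convex_cone_lp_combinations)
  ultimately have "convex_cone hull (range (\<lambda>j. (B $ j, b $ j)) \<union> {(-d, -v), (0, -1)}) \<subseteq> C"
    by (intro hull_minimal) auto
  with assms that show thesis
    unfolding C_def by blast
qed

lemma lp_data_hull_contains_unit:
  fixes B :: "real^'n^'m"
  assumes above: "\<forall>y. (\<forall>j. b $ j \<le> (B *v y) $ j) \<longrightarrow> v < d \<bullet> y"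
  shows "(0, 1) \<in> convex_cone hull (range (\<lambda>j. (B $ j, b $ j)) \<union> {(-d, -v), (0, -1)})"
    (is "_ \<in> convex_cone hull ?S")
proof (rule ccontr)
  \<comment> \<open>Farkas: a hyperplane separating (0, 1) from the cone yields a primal solution y' with
    d \<bullet> y' \<le> v.\<close>
  assume "(0, 1) \<notin> convex_cone hull ?S"
  moreover have "closed (convex_cone hull ?S)"
    by (rule closed_convex_cone_hull) simp
  ultimately obtain a c where ac: "a \<bullet> (0, 1) < c" "\<forall>p\<in>convex_cone hull ?S. c < a \<bullet> p"
    using separating_hyperplane_closed_point[OF convex_convex_cone_hull] by blast
  have "c < 0"
    using ac(2) convex_cone_hull_contains_0 by force
  have nonneg: "0 \<le> a \<bullet> p" if "p \<in> convex_cone hull ?S" for p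
  proof (rule ccontr)
    assume "\<not> 0 \<le> a \<bullet> p"
    then have "(c / (a \<bullet> p)) *\<^sub>R p \<in> convex_cone hull ?S"
      using that \<open>c < 0\<close> by (intro convex_cone_hull_mul) (auto simp: divide_nonpos_neg)
    then show False
      using ac(2) \<open>\<not> 0 \<le> a \<bullet> p\<close> by fastforce
  qed
  obtain y s where a: "a = (y, s)" by (cases a)
  have "s < 0"
    using ac(1) \<open>c < 0\<close> a by simp
  have rows: "0 \<le> y \<bullet> B $ j + s * b $ j" for j
    using nonneg[OF hull_inc[of "(B $ j, b $ j)"]] a by auto
  have obj: "0 \<le> - (y \<bullet> d) - s * v"
    using nonneg[OF hull_inc[of "(-d, -v)"]] a by auto
  define y' where "y' = (- 1 / s) *\<^sub>R y"
  have "b $ j \<le> (B *v y') $ j" for j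
    using rows[of j] \<open>s < 0\<close>
    by (simp add: y'_def matrix_vector_mul_component inner_commute field_simps)
  then have "v < d \<bullet> y'"
    using above by blast
  moreover have "d \<bullet> y' \<le> v"
    using obj \<open>s < 0\<close> by (simp add: y'_def inner_commute field_simps)
  ultimately show False by simp
qed

lemma lp_dual_witness:
  fixes B :: "real^'n^'m"
  assumes feasible: "\<forall>j. b $ j \<le> (B *v y0) $ j"
    and above: "\<forall>y. (\<forall>j. b $ j \<le> (B *v y) $ j) \<longrightarrow> v < d \<bullet> y"
  obtains w where "w \<in> Wset B d" "v < w \<bullet> b"
proof -
  obtain \<mu> t0 t1 where \<mu>: "\<forall>j. 0 \<le> \<mu> $ j" "0 \<le> t0" "0 \<le> t1"
    and unit: "(0, 1) = (transpose B *v \<mu> - t0 *\<^sub>R d, \<mu> \<bullet> b - t0 * v - t1)"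
    by (rule convex_cone_hull_lp_data_cases[OF lp_data_hull_contains_unit[OF above]])
  then have \<mu>B: "transpose B *v \<mu> = t0 *\<^sub>R d" and \<mu>b: "\<mu> \<bullet> b = 1 + t1 + t0 * v"
    by (simp_all add: eq_diff_eq)
  have "t0 \<noteq> 0"
  proof
    assume "t0 = 0"
    then have "\<mu> \<in> Wset B 0"
      using \<mu> \<mu>B by (simp add: Wset_def)
    then have "\<mu> \<bullet> b \<le> 0"
      using weak_duality[OF _ feasible] by fastforce
    with \<mu>b \<open>0 \<le> t1\<close> \<open>t0 = 0\<close> show False by simp
  qed
  with \<mu> have "t0 > 0" by simp
  show thesis
  proof (rule that)
    show "(1 / t0) *\<^sub>R \<mu> \<in> Wset B d"
      using \<mu> \<mu>B \<open>t0 > 0\<close> by (simp del: transpose_matrix_vector add: Wset_def matrix_vector_mult_scaleR)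
    have "((1 / t0) *\<^sub>R \<mu>) \<bullet> b = (1 + t1) / t0 + v"
      using \<mu>b \<open>t0 > 0\<close> by (simp add: field_simps)
    then show "v < ((1 / t0) *\<^sub>R \<mu>) \<bullet> b"
      using \<open>t0 > 0\<close> \<open>0 \<le> t1\<close> by simp
  qed
qed

lemma Wset_direction_if_not_extreme:
  fixes B :: "real^'n^'m"
  assumes w: "w \<in> Wset B d" and not_extreme: "\<not> w extreme_point_of Wset B d"
    and no_ray: "\<forall>h. (\<forall>j. 0 \<le> h $ j) \<and> transpose B *v h = 0 \<longrightarrow> h \<bullet> b \<le> 0"
  obtains g where "transpose B *v g = 0" "0 \<le> g \<bullet> b" "\<forall>j. w $ j = 0 \<longrightarrow> g $ j = 0" "\<exists>j. g $ j < 0"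
proof -
  obtain a c t where a: "a \<in> Wset B d" and c: "c \<in> Wset B d" and "a \<noteq> c" "0 < t" "t < 1"
    and w_eq: "w = (1 - t) *\<^sub>R a + t *\<^sub>R c"
    using w not_extreme unfolding extreme_point_of_def in_segment by blast
  define h where "h = c - a"
  have "h \<noteq> 0"
    using \<open>a \<noteq> c\<close> by (simp add: h_def)
  have "transpose B *v h = 0"
    using a c by (simp del: transpose_matrix_vector add: h_def Wset_def matrix_vector_mult_diff_distrib)
  then have hB: "transpose B *v h = 0" "transpose B *v (- h) = 0"
    using matrix_vector_mult_scaleR[of "transpose B" "-1" h] by (simp_all del: transpose_matrix_vector)
  have h_supp: "h $ j = 0" "(- h) $ j = 0" if "w $ j = 0" for j
  proof -
    have "0 \<le> (1 - t) * a $ j" "0 \<le> t * c $ j"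
      using a c \<open>0 < t\<close> \<open>t < 1\<close> by (simp_all add: Wset_def)
    moreover have "(1 - t) * a $ j + t * c $ j = 0"
      using that w_eq by simp
    ultimately have "(1 - t) * a $ j = 0" "t * c $ j = 0"
      by linarith+
    then show "h $ j = 0" "(- h) $ j = 0"
      using \<open>0 < t\<close> \<open>t < 1\<close> by (simp_all add: h_def)
  qed
  have "\<exists>g\<in>{h, - h}. 0 \<le> g \<bullet> b \<and> (\<exists>j. g $ j < 0)"
  proof (rule ccontr)
    assume "\<not> ?thesis"
    then have sign: "0 \<le> g \<bullet> b \<Longrightarrow> \<forall>j. 0 \<le> g $ j" if "g \<in> {h, - h}" for g
      using that by (auto simp: not_less)
    show False
    proof (cases "0 \<le> h \<bullet> b")
      case True
      then have "\<forall>j. 0 \<le> h $ j"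
        using sign by blast
      then have "0 \<le> (- h) \<bullet> b"
        using no_ray hB by auto
      then have "\<forall>j. 0 \<le> h $ j \<and> h $ j \<le> 0"
        using sign[of "- h"] \<open>\<forall>j. 0 \<le> h $ j\<close> by auto
      then show False
        using \<open>h \<noteq> 0\<close> by (simp add: vec_eq_iff order_antisym)
    next
      case False
      then have "\<forall>j. 0 \<le> (- h) $ j"
        using sign[of "- h"] by simp
      then show False
        using no_ray hB False by fastforce
    qed
  qed
  with hB h_supp that show thesis by blast
qed

lemma Wset_support_reduction:
  fixes B :: "real^'n^'m"
  assumes w: "w \<in> Wset B d" and gB: "transpose B *v g = 0" and gb: "0 \<le> g \<bullet> b"
    and g_supp: "\<forall>j. w $ j = 0 \<longrightarrow> g $ j = 0" and g_neg: "\<exists>j. g $ j < 0"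
  obtains w' where "w' \<in> Wset B d" "w \<bullet> b \<le> w' \<bullet> b" "{j. w' $ j \<noteq> 0} \<subset> {j. w $ j \<noteq> 0}"
proof -
  define J where "J = {j. g $ j < 0}"
  define s where "s = Min ((\<lambda>j. w $ j / (- g $ j)) ` J)"
  have "finite J" "J \<noteq> {}"
    using g_neg by (auto simp: J_def)
  then have "s \<in> (\<lambda>j. w $ j / (- g $ j)) ` J"
    unfolding s_def by (intro Min_in) auto
  then obtain j0 where j0: "j0 \<in> J" "s = w $ j0 / (- g $ j0)"
    by blast
  have s_le: "s \<le> w $ j / (- g $ j)" if "j \<in> J" for j
    unfolding s_def using \<open>finite J\<close> that by simp
  have w_nonneg: "\<forall>j. 0 \<le> w $ j" and wB: "transpose B *v w = d"
    using w by (simp_all add: Wset_def)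
  then have "0 \<le> s"
    using j0 by (simp add: J_def divide_nonneg_neg)
  define w' where "w' = w + s *\<^sub>R g"
  have "0 \<le> w' $ j" for j
  proof (cases "j \<in> J")
    case True
    then have "s * (- g $ j) \<le> w $ j"
      using s_le[OF True] by (simp add: J_def field_simps)
    then show ?thesis by (simp add: w'_def)
  next
    case False
    then show ?thesis
      using w_nonneg \<open>0 \<le> s\<close> by (simp add: J_def w'_def)
  qed
  moreover have "transpose B *v w' = d"
    using wB gB by (simp del: transpose_matrix_vector add: w'_def matrix_vector_right_distrib
        matrix_vector_mult_scaleR)
  ultimately have "w' \<in> Wset B d"
    by (simp add: Wset_def)
  moreover have "w \<bullet> b \<le> w' \<bullet> b"
    using \<open>0 \<le> s\<close> gb by (simp add: w'_def inner_add_left)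
  moreover have "{j. w' $ j \<noteq> 0} \<subset> {j. w $ j \<noteq> 0}"
  proof -
    have "w' $ j0 = 0" "w $ j0 \<noteq> 0"
      using j0 g_supp by (auto simp: J_def w'_def)
    moreover have "{j. w' $ j \<noteq> 0} \<subseteq> {j. w $ j \<noteq> 0}"
      using g_supp by (auto simp: w'_def)
    ultimately show ?thesis by blast
  qed
  ultimately show thesis
    using that by blast
qed

lemma Wset_extreme_point_ge:
  fixes B :: "real^'n^'m"
  assumes w0: "w0 \<in> Wset B d"
    and no_ray: "\<forall>h. (\<forall>j. 0 \<le> h $ j) \<and> transpose B *v h = 0 \<longrightarrow> h \<bullet> b \<le> 0"
  obtains w where "w extreme_point_of Wset B d" "w0 \<bullet> b \<le> w \<bullet> b"
proof -
  define supp :: "real^'m \<Rightarrow> nat" where "supp w = card {j. w $ j \<noteq> 0}" for w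
  obtain w where w: "w \<in> Wset B d" "w0 \<bullet> b \<le> w \<bullet> b"
    and minimal: "\<forall>w'. w' \<in> Wset B d \<and> w0 \<bullet> b \<le> w' \<bullet> b \<longrightarrow> supp w \<le> supp w'"
    using ex_has_least_nat[of "\<lambda>w. w \<in> Wset B d \<and> w0 \<bullet> b \<le> w \<bullet> b" w0 supp] w0 by auto
  have "w extreme_point_of Wset B d"
  proof (rule ccontr)
    assume "\<not> w extreme_point_of Wset B d"
    then obtain g where "transpose B *v g = 0" "0 \<le> g \<bullet> b" "\<forall>j. w $ j = 0 \<longrightarrow> g $ j = 0" "\<exists>j. g $ j < 0"
      using Wset_direction_if_not_extreme[OF w(1) _ no_ray] by blast
    then obtain w' where "w' \<in> Wset B d" "w \<bullet> b \<le> w' \<bullet> b" "{j. w' $ j \<noteq> 0} \<subset> {j. w $ j \<noteq> 0}"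
      using Wset_support_reduction[OF w(1)] by blast
    moreover from this have "supp w' < supp w"
      unfolding supp_def by (intro psubset_card_mono) simp_all
    ultimately show False
      using minimal w(2) by (meson not_le order_trans)
  qed
  with w(2) that show thesis by blast
qed

lemma lp_min_le_if_extreme_points_le:
  fixes B :: "real^'n^'m"
  assumes feasible: "\<forall>j. b $ j \<le> (B *v y0) $ j"
    and extreme_le: "\<forall>w. w extreme_point_of Wset B d \<longrightarrow> w \<bullet> b \<le> v"
  shows "lp_min B d b \<le> ereal v"
proof (rule ccontr)
  assume "\<not> lp_min B d b \<le> ereal v"
  then have "ereal v < ereal (d \<bullet> y)" if "\<forall>j. b $ j \<le> (B *v y) $ j" for y
    unfolding lp_min_def by (rule less_INF_D[OF iffD1[OF not_le]]) (use that in simp)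
  then have "\<forall>y. (\<forall>j. b $ j \<le> (B *v y) $ j) \<longrightarrow> v < d \<bullet> y"
    by simp
  then obtain w where "w \<in> Wset B d" "v < w \<bullet> b"
    using lp_dual_witness[OF feasible] by blast
  moreover have "\<forall>h. (\<forall>j. 0 \<le> h $ j) \<and> transpose B *v h = 0 \<longrightarrow> h \<bullet> b \<le> 0"
    using weak_duality[OF _ feasible] by (fastforce simp: Wset_def)
  ultimately obtain w' where "w' extreme_point_of Wset B d" "w \<bullet> b \<le> w' \<bullet> b"
    using Wset_extreme_point_ge by blast
  with extreme_le \<open>v < w \<bullet> b\<close> show False
    by force
qed

section \<open>Separation and cones\<close>

lemma convex_hull_fst_zero_snd_le:
  fixes a :: "'a::real_inner" and S :: "('a \<times> real) set"
  assumes S: "\<forall>p\<in>S. 0 \<le> fst p \<bullet> a \<and> (fst p \<bullet> a = 0 \<longrightarrow> snd p \<le> c)"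
    and q: "q \<in> convex hull S" "fst q = 0"
  shows "snd q \<le> c"
proof -
  define T where "T = {p. 0 \<le> fst p \<bullet> a \<and> (fst p \<bullet> a = 0 \<longrightarrow> snd p \<le> c)}"
  have "convex T"
    unfolding convex_def
  proof (intro ballI allI impI)
    fix p p' and u v :: real
    assume "p \<in> T" "p' \<in> T" "0 \<le> u" "0 \<le> v" "u + v = 1"
    then have nonneg: "0 \<le> u * (fst p \<bullet> a)" "0 \<le> v * (fst p' \<bullet> a)"
      by (simp_all add: T_def)
    have "u * snd p + v * snd p' \<le> c" if "u * (fst p \<bullet> a) + v * (fst p' \<bullet> a) = 0"
    proof -
      have "u * (fst p \<bullet> a) = 0" "v * (fst p' \<bullet> a) = 0"
        using that nonneg by linarith+
      then have "u * snd p \<le> u * c" "v * snd p' \<le> v * c"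
        using \<open>p \<in> T\<close> \<open>p' \<in> T\<close> \<open>0 \<le> u\<close> \<open>0 \<le> v\<close> by (auto simp: T_def intro: mult_left_mono)
      then have "u * snd p + v * snd p' \<le> (u + v) * c"
        by (simp add: distrib_right)
      with \<open>u + v = 1\<close> show ?thesis by simp
    qed
    with nonneg show "u *\<^sub>R p + v *\<^sub>R p' \<in> T"
      by (simp add: T_def inner_add_left)
  qed
  then have "convex hull S \<subseteq> T"
    using S by (intro hull_minimal) (auto simp: T_def)
  with q show ?thesis
    by (auto simp: T_def)
qed

lemma linear_majorant_if_hull_avoids_ray:
  fixes e :: "'a::topological_space \<Rightarrow> 'b::euclidean_space" and psi :: "'a \<Rightarrow> real"
  assumes "compact K" "continuous_on K e" "continuous_on K psi"
    and avoids: "\<forall>q\<in>convex hull ((\<lambda>z. (e z, psi z)) ` K). fst q = 0 \<longrightarrow> snd q < 0"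
  shows "\<exists>\<beta>. \<forall>z\<in>K. psi z \<le> \<beta> \<bullet> e z"
proof (cases "K = {}")
  case True
  then show ?thesis by simp
next
  case False
  define P where "P = convex hull ((\<lambda>z. (e z, psi z)) ` K)"
  have "compact ((\<lambda>z. (e z, psi z)) ` K)"
    using assms by (intro compact_continuous_image continuous_on_Pair)
  then have "compact P"
    unfolding P_def by (rule compact_convex_hull)
  moreover have "P \<inter> {0} \<times> {0..} = {}"
    using avoids unfolding P_def by force
  ultimately obtain a c where aP: "\<forall>p\<in>P. a \<bullet> p < c" and ray: "\<forall>p\<in>{0} \<times> {0..}. c < a \<bullet> p"
    using separating_hyperplane_compact_closed[of P "{0} \<times> {0..}"] False
    by (auto simp: P_def closed_Times convex_Times)
  obtain \<gamma> \<eta> where a: "a = (\<gamma>, \<eta>)" by (cases a)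
  have "c < 0"
    using ray[rule_format, of "(0, 0)"] by (simp add: a)
  have "0 \<le> \<eta>"
  proof (rule ccontr)
    assume "\<not> 0 \<le> \<eta>"
    then have "(0, c / \<eta>) \<in> {0} \<times> {0..}"
      using \<open>c < 0\<close> by (simp add: divide_nonpos_neg)
    then have "c < a \<bullet> (0, c / \<eta>)"
      using ray by blast
    with \<open>\<not> 0 \<le> \<eta>\<close> show False
      by (simp add: a)
  qed
  obtain z0 where "\<forall>z\<in>K. psi z \<le> psi z0"
    using continuous_attains_sup[of K psi] assms False by blast
  define M where "M = max (psi z0) 0"
  then have M: "psi z \<le> M" if "z \<in> K" for z
    using \<open>\<forall>z\<in>K. psi z \<le> psi z0\<close> that by fastforce
  have "0 \<le> M"
    by (simp add: M_def)
  define s where "s = - c / (M + 1)"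
  have "0 < s" "s * M \<le> - c"
    using \<open>c < 0\<close> \<open>0 \<le> M\<close> by (simp_all add: s_def field_simps)
  have "psi z \<le> (- (1 / (\<eta> + s)) *\<^sub>R \<gamma>) \<bullet> e z" if "z \<in> K" for z
  proof -
    have "(e z, psi z) \<in> P"
      unfolding P_def using that by (intro hull_inc) auto
    then have "\<gamma> \<bullet> e z + \<eta> * psi z < c"
      using aP by (auto simp: a)
    moreover have "s * psi z \<le> s * M"
      using M[OF that] \<open>0 < s\<close> by simp
    then have "s * psi z \<le> - c"
      using \<open>s * M \<le> - c\<close> by linarith
    ultimately have "(\<eta> + s) * psi z < - (\<gamma> \<bullet> e z)"
      by (simp add: distrib_right)
    then show ?thesis
      using \<open>0 \<le> \<eta>\<close> \<open>0 < s\<close> by (simp add: field_simps)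
  qed
  then show ?thesis by blast
qed

lemma zero_if_in_cone_and_slice_bounded:
  fixes C :: "(real^'k) set"
  assumes "convex C" "cone C"
    and slice: "bounded {u\<in>C. u $ i = 1}" "{u\<in>C. u $ i = 1} \<noteq> {}"
    and u: "u \<in> C" "u $ i = 0"
  shows "u = 0"
proof (rule ccontr)
  assume "u \<noteq> 0"
  obtain u0 where u0: "u0 \<in> C" "u0 $ i = 1"
    using slice(2) by blast
  obtain M where M: "\<forall>v\<in>{u\<in>C. u $ i = 1}. norm v \<le> M"
    using slice(1) bounded_iff by blast
  define t where "t = (M + norm u0 + 1) / norm u"
  have "norm u0 \<le> M"
    using M u0 by blast
  then have M_pos: "0 \<le> M + norm u0 + 1"
    using norm_ge_zero[of u0] by linarith
  then have "0 \<le> t"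
    by (simp add: t_def)
  then have "t *\<^sub>R u \<in> C"
    using \<open>cone C\<close> u by (simp add: cone_def)
  then have "u0 + t *\<^sub>R u \<in> C"
    using \<open>convex C\<close> \<open>cone C\<close> u0 convex_cone by blast
  with u u0 have "u0 + t *\<^sub>R u \<in> {u\<in>C. u $ i = 1}"
    by simp
  then have "norm (u0 + t *\<^sub>R u) \<le> M"
    using M by blast
  moreover have "norm (t *\<^sub>R u) \<le> norm (u0 + t *\<^sub>R u) + norm u0"
    using norm_triangle_ineq4[of "u0 + t *\<^sub>R u" u0] by simp
  moreover have "norm (t *\<^sub>R u) = M + norm u0 + 1"
    using \<open>u \<noteq> 0\<close> M_pos by (simp add: t_def)
  ultimately show False by simp
qed

lemma nonneg_quadratic_form_on_cone:
  fixes M :: "real^'n^'n"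
  assumes "cone K" and sphere: "\<forall>z\<in>K \<inter> sphere 0 1. 0 \<le> z \<bullet> (M *v z)" and "z \<in> K"
  shows "0 \<le> z \<bullet> (M *v z)"
proof (cases "z = 0")
  case True
  then show ?thesis by simp
next
  case False
  define z1 where "z1 = (1 / norm z) *\<^sub>R z"
  have "z1 \<in> K \<inter> sphere 0 1"
    using assms False by (simp add: z1_def cone_def)
  then have "0 \<le> z1 \<bullet> (M *v z1)"
    using sphere by blast
  moreover have "z \<bullet> (M *v z) = (norm z)\<^sup>2 * (z1 \<bullet> (M *v z1))"
    using False by (simp add: z1_def matrix_vector_mult_scaleR power2_eq_square)
  ultimately show ?thesis by simp
qed

section \<open>The reformulation at a fixed first-stage decision\<close>

locale copositive_reformulation =
  fixes A :: "real^'n1^'m" and B :: "real^'n2^'m" and d :: "real^'n2" and F :: "real^'k^'m"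
    and Uh :: "(real^'k) set" and i1 :: 'k and r :: real and x :: "real^'n1"
  assumes Uh_closed: "closed Uh" and Uh_convex: "convex Uh" and Uh_cone: "cone Uh"
    and Uh_nonneg: "\<forall>u\<in>Uh. 0 \<le> u $ i1"
    and U_nonempty: "Uset i1 Uh \<noteq> {}" and U_compact: "compact (Uset i1 Uh)"
    and recourse: "\<forall>u\<in>Uset i1 Uh. \<exists>y. \<forall>j. (F *v u - A *v x) $ j \<le> (B *v y) $ j"
    and r_pos: "0 < r"
    and r_bound: "\<forall>u\<in>Uset i1 Uh. \<forall>w. w extreme_point_of (Wset B d) \<longrightarrow>
                    (norm u)\<^sup>2 + (norm w)\<^sup>2 \<le> r"
begin

lemma extreme_value_le_cop_objective:
  assumes u: "u \<in> Uset i1 Uh" and feasible: "(lam, Lam, rho) \<in> cop_feasible i1 Uh A B d F x"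
    and w: "w extreme_point_of Wset B d"
  shows "w \<bullet> (F *v u - A *v x) \<le> lam + r * rho"
proof -
  define z where "z = vec_join u w"
  have "u \<in> Uh" "u $ i1 = 1"
    using u by (simp_all add: Uset_def)
  moreover have "\<forall>j. 0 \<le> w $ j" "transpose B *v w = d"
    using w by (auto simp: extreme_point_of_def Wset_def)
  ultimately have "z \<in> cone_prod Uh" "Emat i1 B d *v z = 0"
    "Hmat i1 A F x *v vec_inl z = F *v u - A *v x"
    by (simp_all add: z_def mem_cone_prod_iff Emat_mult_vec Hmat_mult_vec)
  then have "0 \<le> rho" "0 \<le> lam - w \<bullet> (F *v u - A *v x) + rho * (z \<bullet> z)"
    using feasible \<open>u $ i1 = 1\<close> by (auto simp: mem_cop_feasible_iff quadratic_form_cop_matrix z_def)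
  moreover have "z \<bullet> z \<le> r"
    using r_bound u w by (simp add: z_def inner_vec_Plus power2_norm_eq_inner)
  ultimately show ?thesis
    using mult_left_mono[of "z \<bullet> z" r rho] by (simp add: mult.commute)
qed

lemma pi_val_le_cop_value: "pi_val A B d F (Uset i1 Uh) x \<le> cop_value i1 Uh A B d F r x"
  unfolding pi_val_eq_SUP_lp_min cop_value_def
proof (intro SUP_least INF_greatest)
  fix u and p :: "real \<times> (real^'n2^('k + 'm)) \<times> real"
  assume u: "u \<in> Uset i1 Uh" and p: "p \<in> cop_feasible i1 Uh A B d F x"
  obtain lam Lam rho where p_eq: "p = (lam, Lam, rho)"
    by (cases p)
  obtain y0 where y0: "\<forall>j. (F *v u - A *v x) $ j \<le> (B *v y0) $ j"
    using recourse u by blast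
  have "lp_min B d (F *v u - A *v x) \<le> ereal (lam + r * rho)"
    by (rule lp_min_le_if_extreme_points_le[OF y0])
      (use extreme_value_le_cop_objective[OF u p[unfolded p_eq]] in blast)
  then show "lp_min B d (F *v u - A *v x) \<le> (case p of (lam, Lam, rho) \<Rightarrow> ereal (lam + r * rho))"
    by (simp add: p_eq)
qed

lemma cone_zero_if_first_coordinate_zero: "u \<in> Uh \<Longrightarrow> u $ i1 = 0 \<Longrightarrow> u = 0"
  using zero_if_in_cone_and_slice_bounded[OF Uh_convex Uh_cone] compact_imp_bounded[OF U_compact]
    U_nonempty
  by (simp add: Uset_def)

lemma Hmat_form_le_pi_val:
  assumes pi: "pi_val A B d F (Uset i1 Uh) x \<le> ereal v"
    and z: "z \<in> cone_prod Uh" "Emat i1 B d *v z = 0"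
  shows "vec_inr z \<bullet> (Hmat i1 A F x *v vec_inl z) \<le> v * (z $ Inl i1)\<^sup>2"
proof -
  define t where "t = z $ Inl i1"
  have "vec_inl z \<in> Uh" "\<forall>j. 0 \<le> vec_inr z $ j"
    using z(1) by (simp_all add: mem_cone_prod_iff)
  have wB: "transpose B *v vec_inr z = t *\<^sub>R d"
    using z(2) by (simp add: Emat_mult_vec t_def)
  have "0 \<le> t"
    using Uh_nonneg[rule_format, OF \<open>vec_inl z \<in> Uh\<close>] by (simp add: t_def)
  show ?thesis
  proof (cases "t = 0")
    case True
    then have "vec_inl z = 0"
      using cone_zero_if_first_coordinate_zero \<open>vec_inl z \<in> Uh\<close> by (simp add: t_def)
    with True show ?thesis
      by (simp add: t_def)
  next
    case False
    with \<open>0 \<le> t\<close> have "0 < t" by simp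
    define u where "u = (1 / t) *\<^sub>R vec_inl z"
    define w where "w = (1 / t) *\<^sub>R vec_inr z"
    have "u \<in> Uset i1 Uh"
      using Uh_cone \<open>vec_inl z \<in> Uh\<close> \<open>0 < t\<close> by (simp add: u_def Uset_def cone_def t_def)
    moreover have "w \<in> Wset B d"
      using \<open>\<forall>j. 0 \<le> vec_inr z $ j\<close> wB \<open>0 < t\<close>
      by (simp del: transpose_matrix_vector add: w_def Wset_def matrix_vector_mult_scaleR)
    ultimately have "w \<bullet> (F *v u - A *v x) \<le> v"
      using order_trans[OF dual_value_le_pi_val pi] by simp
    moreover have "vec_inr z \<bullet> (Hmat i1 A F x *v vec_inl z) = t\<^sup>2 * (w \<bullet> (F *v u - A *v x))"
    proof -
      have "vec_inl z = t *\<^sub>R u" "vec_inr z = t *\<^sub>R w" "u $ i1 = 1"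
        using \<open>0 < t\<close> by (simp_all add: u_def w_def t_def)
      then show ?thesis
        by (simp add: Hmat_mult_vec matrix_vector_mult_scaleR power2_eq_square)
    qed
    ultimately show ?thesis
      using mult_left_mono[of "w \<bullet> (F *v u - A *v x)" v "t\<^sup>2"] by (simp add: t_def mult.commute)
  qed
qed

lemma lifted_points_hull_avoids_ray:
  assumes pi: "pi_val A B d F (Uset i1 Uh) x \<le> ereal v" and "0 < rho"
  shows "\<forall>q\<in>convex hull ((\<lambda>z. (dyad (Emat i1 B d *v z) z,
            vec_inr z \<bullet> (Hmat i1 A F x *v vec_inl z) - v * (z $ Inl i1)\<^sup>2 - rho))
          ` (cone_prod Uh \<inter> sphere 0 1)). fst q = 0 \<longrightarrow> snd q < 0"
    (is "\<forall>q\<in>convex hull ?P. _")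
proof -
  let ?E = "Emat i1 B d"
  have "dyad (?E *v z) z \<bullet> ?E = (?E *v z) \<bullet> (?E *v z)" for z
    by (simp add: inner_commute[of "dyad _ _"] inner_dyad)
  then have "\<forall>p\<in>?P. 0 \<le> fst p \<bullet> ?E \<and> (fst p \<bullet> ?E = 0 \<longrightarrow> snd p \<le> - rho)"
    using Hmat_form_le_pi_val[OF pi] by auto
  then show ?thesis
    using convex_hull_fst_zero_snd_le[of ?P ?E "- rho"] \<open>0 < rho\<close> by fastforce
qed

lemma cop_feasible_if_pi_val_le:
  assumes pi: "pi_val A B d F (Uset i1 Uh) x \<le> ereal v" and "0 < rho"
  shows "\<exists>Lam. (v, Lam, rho) \<in> cop_feasible i1 Uh A B d F x"
proof -
  let ?E = "Emat i1 B d"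
  \<comment> \<open>Linear functionals \<beta> \<bullet> e z are exactly the Lambda-terms (\<beta> *v z) \<bullet> (E *v z) of the
    quadratic form, with Lambda = transpose \<beta>.\<close>
  define S :: "(real^('k + 'm)) set" where "S = cone_prod Uh \<inter> sphere 0 1"
  define e where "e z = dyad (?E *v z) z" for z
  define psi where "psi z = vec_inr z \<bullet> (Hmat i1 A F x *v vec_inl z) - v * (z $ Inl i1)\<^sup>2 - rho" for z
  have "compact S"
    unfolding S_def by (intro closed_Int_compact closed_cone_prod Uh_closed compact_sphere)
  moreover have "continuous_on S e"
    unfolding e_def dyad_def matrix_vector_mult_def by (intro continuous_intros)
  moreover have "continuous_on S psi"
    unfolding psi_def inner_vec_def vec_inr_def vec_inl_def matrix_vector_mult_def by (intro continuous_intros)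
  moreover have "\<forall>q\<in>convex hull ((\<lambda>z. (e z, psi z)) ` S). fst q = 0 \<longrightarrow> snd q < 0"
    using lifted_points_hull_avoids_ray[OF pi \<open>0 < rho\<close>] by (simp add: S_def e_def psi_def)
  ultimately obtain \<beta> where \<beta>: "\<forall>z\<in>S. psi z \<le> \<beta> \<bullet> e z"
    using linear_majorant_if_hull_avoids_ray by blast
  have sphere: "\<forall>z\<in>S. 0 \<le> z \<bullet> (cop_matrix i1 A B d F x v (transpose \<beta>) rho *v z)"
  proof
    fix z assume "z \<in> S"
    have "z \<bullet> z = 1"
      using \<open>z \<in> S\<close> by (simp add: S_def dot_square_norm)
    moreover have "\<beta> \<bullet> e z = (\<beta> *v z) \<bullet> (?E *v z)"
      by (simp add: e_def inner_dyad inner_commute)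
    moreover have "psi z \<le> \<beta> \<bullet> e z"
      using \<beta> \<open>z \<in> S\<close> by blast
    ultimately show "0 \<le> z \<bullet> (cop_matrix i1 A B d F x v (transpose \<beta>) rho *v z)"
      unfolding quadratic_form_cop_matrix psi_def transpose_transpose by simp
  qed
  have "\<forall>z\<in>cone_prod Uh. 0 \<le> z \<bullet> (cop_matrix i1 A B d F x v (transpose \<beta>) rho *v z)"
    using nonneg_quadratic_form_on_cone[OF cone_cone_prod[OF Uh_cone] sphere[unfolded S_def]] by blast
  with \<open>0 < rho\<close> show ?thesis
    by (auto simp: mem_cop_feasible_iff)
qed

lemma cop_value_le_pi_val: "cop_value i1 Uh A B d F r x \<le> pi_val A B d F (Uset i1 Uh) x"
proof (rule dense_ge)
  fix t assume "pi_val A B d F (Uset i1 Uh) x < t"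
  show "cop_value i1 Uh A B d F r x \<le> t"
  proof (cases t)
    case (real v)
    show ?thesis
      unfolding real
    proof (rule ereal_le_epsilon2)
      fix \<epsilon> :: real assume "0 < \<epsilon>"
      then obtain Lam where "(v, Lam, \<epsilon> / r) \<in> cop_feasible i1 Uh A B d F x"
        using cop_feasible_if_pi_val_le \<open>pi_val A B d F (Uset i1 Uh) x < t\<close> r_pos
        by (force simp: real)
      then have "cop_value i1 Uh A B d F r x \<le> ereal (v + r * (\<epsilon> / r))"
        unfolding cop_value_def by (rule INF_lower2) simp
      then show "cop_value i1 Uh A B d F r x \<le> ereal v + ereal \<epsilon>"
        using r_pos by simp
    qed
  qed (use \<open>pi_val A B d F (Uset i1 Uh) x < t\<close> in simp_all)
qed

end

theorem proposition1:
  fixes A :: "real^'n1^'m" and B :: "real^'n2^'m" and c :: "real^'n1" and d :: "real^'n2"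
    and F :: "real^'k^'m" and X :: "(real^'n1) set" and Uh :: "(real^'k) set"
    and i1 :: 'k and r :: real
  assumes X_closed: "closed X" and X_convex: "convex X"
    and Uh_closed: "closed Uh" and Uh_convex: "convex Uh" and Uh_cone: "cone Uh"
    and Uh_fulldim: "interior Uh \<noteq> {}"
    and Uh_nonneg: "\<forall>u\<in>Uh. 0 \<le> u $ i1"
    and U_nonempty: "Uset i1 Uh \<noteq> {}" and U_compact: "compact (Uset i1 Uh)"
    and A2: "rlp_feasible X (Uset i1 Uh) A B F \<noteq> {}"
    and A3: "\<bar>rlp_value X (Uset i1 Uh) A B c d F\<bar> \<noteq> \<infinity>"
    and A4: "\<forall>x\<in>X. \<forall>u\<in>Uset i1 Uh. \<exists>y. \<forall>j. (F *v u - A *v x) $ j \<le> (B *v y) $ j"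
    and r_pos: "r > 0"
    and r_bound: "\<forall>u\<in>Uset i1 Uh. \<forall>w. w extreme_point_of (Wset B d) \<longrightarrow>
                    (norm u)\<^sup>2 + (norm w)\<^sup>2 \<le> r"
  shows "\<forall>x\<in>X. cop_value i1 Uh A B d F r x = pi_val A B d F (Uset i1 Uh) x"
proof
  fix x assume "x \<in> X"
  interpret copositive_reformulation A B d F Uh i1 r x
    by unfold_locales (use assms \<open>x \<in> X\<close> in auto)
  show "cop_value i1 Uh A B d F r x = pi_val A B d F (Uset i1 Uh) x"
    using cop_value_le_pi_val pi_val_le_cop_value by (rule antisym)
qed

end
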